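(* Let $q\ge 2$ and $n,l\ge1$. For every IDF code over $l$ blocks for $\Pi^q_n$ (with stochastic or deterministic encoder and deterministic decoding sets) with $M\ge 2^{q^{nl}}$ messages, the type-I and type-II error probabilities satisfy $\lambda_1+\lambda_2\ge1$.
   Context: Fix an integer $q\ge 2$, $\mathcal A_q=\{1,\dots,q\}$. For $n\ge1$ and $\sigma\in S_n$, $\sigma\mathbf x=(x_{\sigma^{-1}(1)},\dots,x_{\sigma^{-1}(n)})$ for $\mathbf x\in\mathcal A_q^n$; the $n$-block $q$-ary uniform permutation channel $\Pi^q_n$ has input/output alphabet $\mathcal A_q^n$ and $\Pi^q_n(\mathbf y\mid\mathbf x)=\frac1{n!}\sum_{\sigma\in S_n}\mathbf 1\{\mathbf y=\sigma\mathbf x\}$. An identification-feedback (IDF) code over $l$ blocks with $M$ messages for $\Pi^q_n$ (with block-wise noiseless feedback) is a family $\{(\mathbb Q_{i,1},\dots,\mathbb Q_{i,l},\mathcal D_i)\}_{i=1}^M$ where $\mathbb Q_{i,j}(\mathbf x^{(j)}\mid \mathbf y^{(1)},\dots,\mathbf y^{(j-1)},\mathbf x^{(1)},\dots,\mathbf x^{(j-1)})$ is a conditional probability distribution on $\mathcal A_q^n$ given the previous output blocks (fed back) and previous input blocks, and $\mathcal D_i\subseteq(\mathcal A_q^n)^l$. When message $i$ is sent, the blocks have joint law $\mathbb P^{(i)}(\underline{\mathbf x},\underline{\mathbf y})=\prod_{j=1}^l\mathbb Q_{i,j}(\mathbf x^{(j)}\mid\mathbf y^{(1)},\dots,\mathbf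 y^{(j-1)},\mathbf x^{(1)},\dots,\mathbf x^{(j-1)})\,\Pi^q_n(\mathbf y^{(j)}\mid\mathbf x^{(j)})$. The code is deterministic if each $\mathbb Q_{i,j}$ is a point mass given by a function $\mathbf f_{i,j}$ of the past blocks. Error probabilities: $\lambda_{i\to j}=\mathbb P^{(i)}(\underline{\mathbf y}\in\mathcal D_j)$ for $i\ne j$, $\lambda_{i\not\to i}=\mathbb P^{(i)}(\underline{\mathbf y}\notin\mathcal D_i)$, type-I error $\lambda_1=\max_i\lambda_{i\not\to i}$, type-II error $\lambda_2=\max_{i\neq j}\lambda_{i\to j}$. *)

theory Defs
  imports "HOL-Analysis.Analysis" "HOL-Combinatorics.Permutations"
begin

text \<open>Blocks of length n over the alphabet {1..q}: elements of A_q^n, as lists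
  (position i of the list is coordinate i+1).\<close>
definition blocks :: "nat \<Rightarrow> nat \<Rightarrow> nat list set" where
  "blocks q n = {x. length x = n \<and> set x \<subseteq> {1..q}}"

definition block_seqs :: "nat \<Rightarrow> nat \<Rightarrow> nat \<Rightarrow> nat list list set" where
  "block_seqs q n l = {xs. length xs = l \<and> set xs \<subseteq> blocks q n}"

definition perm_act :: "nat \<Rightarrow> (nat \<Rightarrow> nat) \<Rightarrow> nat list \<Rightarrow> nat list" where
  "perm_act n \<sigma> x = map (\<lambda>i. x ! inv \<sigma> i) [0..<n]"

definition perm_channel :: "nat \<Rightarrow> nat list \<Rightarrow> nat list \<Rightarrow> real" where
  "perm_channel n y x =
     real (card {\<sigma>. \<sigma> permutes {..<n} \<and> y = perm_act n \<sigma> x}) / fact n"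

text \<open>A (stochastic) encoder for one message: Qi j ys xs x is the probability
  of input block x in block j (0-based, j < l) given the previous output blocks ys
  and previous input blocks xs (each a list of length j).\<close>
definition valid_encoder ::
  "nat \<Rightarrow> nat \<Rightarrow> nat \<Rightarrow> (nat \<Rightarrow> nat list list \<Rightarrow> nat list list \<Rightarrow> nat list \<Rightarrow> real) \<Rightarrow> bool" where
  "valid_encoder q n l Qi \<longleftrightarrow>
     (\<forall>j<l. \<forall>ys xs. ys \<in> block_seqs q n j \<and> xs \<in> block_seqs q n j \<longrightarrow>
        (\<forall>x\<in>blocks q n. 0 \<le> Qi j ys xs x) \<and> (\<Sum>x\<in>blocks q n. Qi j ys xs x) = 1)"

definition joint_prob ::
  "nat \<Rightarrow> nat \<Rightarrow> (nat \<Rightarrow> nat list list \<Rightarrow> nat list list \<Rightarrow> nat list \<Rightarrow> real)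
     \<Rightarrow> nat list list \<Rightarrow> nat list list \<Rightarrow> real" where
  "joint_prob n l Qi xs ys =
     (\<Prod>j<l. Qi j (take j ys) (take j xs) (xs ! j) * perm_channel n (ys ! j) (xs ! j))"

definition out_prob ::
  "nat \<Rightarrow> nat \<Rightarrow> nat \<Rightarrow> (nat \<Rightarrow> nat list list \<Rightarrow> nat list list \<Rightarrow> nat list \<Rightarrow> real)
     \<Rightarrow> nat list list set \<Rightarrow> real" where
  "out_prob q n l Qi E =
     (\<Sum>xs\<in>block_seqs q n l. \<Sum>ys\<in>block_seqs q n l \<inter> E. joint_prob n l Qi xs ys)"

definition IDF_code ::
  "nat \<Rightarrow> nat \<Rightarrow> nat \<Rightarrow> nat
     \<Rightarrow> (nat \<Rightarrow> nat \<Rightarrow> nat list list \<Rightarrow> nat list list \<Rightarrow> nat list \<Rightarrow> real)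
     \<Rightarrow> (nat \<Rightarrow> nat list list set) \<Rightarrow> bool" where
  "IDF_code q n l M Q D \<longleftrightarrow>
     (\<forall>i\<in>{1..M}. valid_encoder q n l (Q i) \<and> D i \<subseteq> block_seqs q n l)"

definition type1_error where
  "type1_error q n l M Q D =
     Max ((\<lambda>i. out_prob q n l (Q i) (block_seqs q n l - D i)) ` {1..M})"

definition type2_error where
  "type2_error q n l M Q D =
     Max {out_prob q n l (Q i) (D j) | i j. i \<in> {1..M} \<and> j \<in> {1..M} \<and> i \<noteq> j}"

end

theory Submission
  imports Defs
begin

text \<open>There are only \<open>2 ^ q ^ (n * l)\<close> possible decoding sets, namely the subsets of
  \<open>(A_q^n)^l\<close>. If two messages \<open>i \<noteq> j\<close> share a decoding set, then
  \<open>\<lambda>\<^sub>1 + \<lambda>\<^sub>2 \<ge> \<lambda>\<^bsub>i\<not>\<rightarrow>i\<^esub> + \<lambda>\<^bsub>i\<rightarrow>j\<^esub> = 1\<close>. Otherwise the decoding sets exhaust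
  all subsets, so some message has the empty decoding set and type-I error \<open>1\<close>.\<close>

lemma finite_blocks: "finite (blocks q n)"
proof -
  have "blocks q n = {xs. set xs \<subseteq> {1..q} \<and> length xs = n}"
    by (auto simp: blocks_def)
  then show ?thesis
    using finite_lists_length_eq[of "{1..q}" n] by simp
qed

lemma finite_block_seqs: "finite (block_seqs q n l)"
proof -
  have "block_seqs q n l = {xs. set xs \<subseteq> blocks q n \<and> length xs = l}"
    by (auto simp: block_seqs_def)
  then show ?thesis
    using finite_lists_length_eq[OF finite_blocks] by simp
qed

lemma card_block_seqs: "card (block_seqs q n l) = q ^ (n * l)"
proof -
  have "block_seqs q n l = {xs. set xs \<subseteq> blocks q n \<and> length xs = l}"
    by (auto simp: block_seqs_def)
  moreover have "blocks q n = {xs. set xs \<subseteq> {1..q} \<and> length xs = n}"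
    by (auto simp: blocks_def)
  ultimately show ?thesis
    using card_lists_length_eq[OF finite_blocks, of q n l] card_lists_length_eq[of "{1..q}" n]
    by (simp add: power_mult)
qed

lemma block_seqs_0: "block_seqs q n 0 = {[]}"
  by (auto simp: block_seqs_def)

lemma block_seqs_Suc:
  "block_seqs q n (Suc k) = (\<lambda>(xs, x). xs @ [x]) ` (block_seqs q n k \<times> blocks q n)"
proof (intro equalityI subsetI)
  fix zs assume "zs \<in> block_seqs q n (Suc k)"
  then have len: "length zs = Suc k" and set: "set zs \<subseteq> blocks q n"
    by (auto simp: block_seqs_def)
  then obtain xs x where zs: "zs = xs @ [x]"
    by (cases zs rule: rev_cases) auto
  have "(xs, x) \<in> block_seqs q n k \<times> blocks q n"
    using len set by (simp add: zs block_seqs_def)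
  then show "zs \<in> (\<lambda>(xs, x). xs @ [x]) ` (block_seqs q n k \<times> blocks q n)"
    unfolding zs by (rule rev_image_eqI) simp
qed (auto simp: block_seqs_def)

lemma sum_block_seqs_Suc:
  "(\<Sum>zs\<in>block_seqs q n (Suc k). f zs) = (\<Sum>xs\<in>block_seqs q n k. \<Sum>x\<in>blocks q n. f (xs @ [x]))"
proof -
  have "inj_on (\<lambda>(xs, x). xs @ [x]) (block_seqs q n k \<times> blocks q n)"
    by (auto simp: inj_on_def)
  then show ?thesis
    unfolding block_seqs_Suc by (simp add: sum.reindex sum.cartesian_product split_def)
qed

lemma perm_act_in_blocks:
  assumes "\<sigma> permutes {..<n}" and "x \<in> blocks q n"
  shows "perm_act n \<sigma> x \<in> blocks q n"
proof -
  have "inv \<sigma> i < length x" if "i < n" for i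
    using permutes_in_image[OF permutes_inv[OF assms(1)]] that assms(2)
    by (auto simp: blocks_def)
  then have "x ! inv \<sigma> i \<in> {1..q}" if "i < n" for i
    using that assms(2) nth_mem by (fastforce simp: blocks_def)
  then show ?thesis
    by (auto simp: blocks_def perm_act_def)
qed

lemma perm_channel_nonneg: "0 \<le> perm_channel n y x"
  by (simp add: perm_channel_def)

text \<open>Each of the \<open>n!\<close> permutations sends \<open>x\<close> to exactly one output block.\<close>
lemma sum_perm_channel:
  assumes "x \<in> blocks q n"
  shows "(\<Sum>y\<in>blocks q n. perm_channel n y x) = 1"
proof -
  let ?S = "{\<sigma>. \<sigma> permutes {..<n}}"
  have "(\<Sum>y\<in>blocks q n. card {\<sigma>\<in>?S. y = perm_act n \<sigma> x}) = (\<Sum>\<sigma>\<in>?S. 1)"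
  proof (rule sum_multicount_gen[OF finite_blocks finite_permutations], simp, intro ballI)
    fix \<sigma> assume "\<sigma> \<in> ?S"
    then have "{y\<in>blocks q n. y = perm_act n \<sigma> x} = {perm_act n \<sigma> x}"
      using perm_act_in_blocks assms by auto
    then show "card {y\<in>blocks q n. y = perm_act n \<sigma> x} = 1"
      by simp
  qed
  also have "\<dots> = fact n"
    using card_permutations[of "{..<n}" n] by simp
  finally have "real (\<Sum>y\<in>blocks q n. card {\<sigma>\<in>?S. y = perm_act n \<sigma> x}) = fact n"
    by (simp only: of_nat_fact)
  then show ?thesis
    by (simp add: perm_channel_def flip: sum_divide_distrib)
qed

lemma joint_prob_snoc:
  assumes "length xs = k" and "length ys = k"
  shows "joint_prob n (Suc k) Qi (xs @ [x]) (ys @ [y])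
    = joint_prob n k Qi xs ys * (Qi k ys xs x * perm_channel n y x)"
  unfolding joint_prob_def prod.lessThan_Suc using assms
  by (auto simp: nth_append intro!: prod.cong)

lemma joint_prob_nonneg:
  assumes "valid_encoder q n l Qi" and "xs \<in> block_seqs q n l" and "ys \<in> block_seqs q n l"
  shows "0 \<le> joint_prob n l Qi xs ys"
  unfolding joint_prob_def
proof (intro prod_nonneg ballI mult_nonneg_nonneg perm_channel_nonneg)
  fix j assume j: "j \<in> {..<l}"
  have "take j ys \<in> block_seqs q n j" "take j xs \<in> block_seqs q n j" "xs ! j \<in> blocks q n"
    using assms(2,3) j by (auto simp: block_seqs_def dest: in_set_takeD)
  then show "0 \<le> Qi j (take j ys) (take j xs) (xs ! j)"
    using assms(1) j unfolding valid_encoder_def by blast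
qed

text \<open>Appending one block, sum out the channel first and then the encoder.\<close>
lemma sum_joint_prob:
  assumes "valid_encoder q n l Qi" and "k \<le> l"
  shows "(\<Sum>xs\<in>block_seqs q n k. \<Sum>ys\<in>block_seqs q n k. joint_prob n k Qi xs ys) = 1"
  using assms(2)
proof (induction k)
  case 0
  then show ?case
    by (simp add: block_seqs_0 joint_prob_def)
next
  case (Suc k)
  let ?P = "joint_prob n k Qi"
  have step: "(\<Sum>x\<in>blocks q n. \<Sum>ys\<in>block_seqs q n k. \<Sum>y\<in>blocks q n.
        ?P xs ys * (Qi k ys xs x * perm_channel n y x)) = (\<Sum>ys\<in>block_seqs q n k. ?P xs ys)"
    if xs: "xs \<in> block_seqs q n k" for xs
  proof -
    have "(\<Sum>x\<in>blocks q n. \<Sum>ys\<in>block_seqs q n k. \<Sum>y\<in>blocks q n.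
          ?P xs ys * (Qi k ys xs x * perm_channel n y x))
        = (\<Sum>ys\<in>block_seqs q n k. ?P xs ys *
            (\<Sum>x\<in>blocks q n. Qi k ys xs x * (\<Sum>y\<in>blocks q n. perm_channel n y x)))"
      by (subst sum.swap) (simp add: sum_distrib_left mult.assoc)
    also have "\<dots> = (\<Sum>ys\<in>block_seqs q n k. ?P xs ys * (\<Sum>x\<in>blocks q n. Qi k ys xs x))"
      by (simp add: sum_perm_channel cong: sum.cong)
    also have "\<dots> = (\<Sum>ys\<in>block_seqs q n k. ?P xs ys)"
      using assms(1) Suc.prems xs by (simp add: valid_encoder_def)
    finally show ?thesis .
  qed
  have "(\<Sum>xs\<in>block_seqs q n (Suc k). \<Sum>ys\<in>block_seqs q n (Suc k). joint_prob n (Suc k) Qi xs ys)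
      = (\<Sum>xs\<in>block_seqs q n k. \<Sum>x\<in>blocks q n. \<Sum>ys\<in>block_seqs q n k. \<Sum>y\<in>blocks q n.
          ?P xs ys * (Qi k ys xs x * perm_channel n y x))"
    unfolding sum_block_seqs_Suc
    by (intro sum.cong refl, subst joint_prob_snoc) (auto simp: block_seqs_def)
  also have "\<dots> = (\<Sum>xs\<in>block_seqs q n k. \<Sum>ys\<in>block_seqs q n k. ?P xs ys)"
    by (rule sum.cong[OF refl step])
  also have "\<dots> = 1"
    using Suc by simp
  finally show ?case .
qed

lemma out_prob_nonneg:
  assumes "valid_encoder q n l Qi"
  shows "0 \<le> out_prob q n l Qi E"
  unfolding out_prob_def using joint_prob_nonneg[OF assms]
  by (intro sum_nonneg) auto

lemma out_prob_block_seqs: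
  assumes "valid_encoder q n l Qi"
  shows "out_prob q n l Qi (block_seqs q n l) = 1"
  using sum_joint_prob[OF assms order.refl] by (simp add: out_prob_def)

lemma out_prob_compl:
  assumes "valid_encoder q n l Qi" and "E \<subseteq> block_seqs q n l"
  shows "out_prob q n l Qi (block_seqs q n l - E) + out_prob q n l Qi E = 1"
proof -
  let ?B = "block_seqs q n l"
  have "(\<Sum>ys\<in>?B - E. joint_prob n l Qi xs ys) + (\<Sum>ys\<in>E. joint_prob n l Qi xs ys)
      = (\<Sum>ys\<in>?B. joint_prob n l Qi xs ys)" for xs
    using assms(2) finite_block_seqs by (metis sum.subset_diff)
  then have "out_prob q n l Qi (?B - E) + out_prob q n l Qi E = out_prob q n l Qi ?B"
    using assms(2) by (simp add: out_prob_def Int_absorb1 Diff_subset flip: sum.distrib)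
  then show ?thesis
    using out_prob_block_seqs[OF assms(1)] by simp
qed

lemma type1_error_ge:
  fixes M :: nat
    and Q :: "nat \<Rightarrow> nat \<Rightarrow> nat list list \<Rightarrow> nat list list \<Rightarrow> nat list \<Rightarrow> real"
    and D :: "nat \<Rightarrow> nat list list set"
  assumes "i \<in> {1..M}"
  shows "out_prob q n l (Q i) (block_seqs q n l - D i) \<le> type1_error q n l M Q D"
  unfolding type1_error_def using assms by (intro Max_ge) auto

lemma type2_error_ge:
  fixes M :: nat
    and Q :: "nat \<Rightarrow> nat \<Rightarrow> nat list list \<Rightarrow> nat list list \<Rightarrow> nat list \<Rightarrow> real"
    and D :: "nat \<Rightarrow> nat list list set"
  assumes "i \<in> {1..M}" and "j \<in> {1..M}" and "i \<noteq> j"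
  shows "out_prob q n l (Q i) (D j) \<le> type2_error q n l M Q D"
proof -
  have "{out_prob q n l (Q i) (D j) | i j. i \<in> {1..M} \<and> j \<in> {1..M} \<and> i \<noteq> j}
      \<subseteq> (\<lambda>(i, j). out_prob q n l (Q i) (D j)) ` ({1..M} \<times> {1..M})"
    by auto
  then have "finite {out_prob q n l (Q i) (D j) | i j. i \<in> {1..M} \<and> j \<in> {1..M} \<and> i \<noteq> j}"
    by (rule finite_subset) simp
  then show ?thesis
    unfolding type2_error_def using assms by (intro Max_ge) auto
qed

text \<open>An injective family of at least \<open>2 ^ card B\<close> subsets of \<open>B\<close> contains every subset.\<close>
lemma empty_member_or_not_inj_on:
  assumes "finite B" and "\<And>i. i \<in> I \<Longrightarrow> D i \<subseteq> B" and "2 ^ card B \<le> card I"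
  shows "(\<exists>i\<in>I. D i = {}) \<or> \<not> inj_on D I"
proof (rule disjCI)
  assume "\<not> \<not> inj_on D I"
  then have "card (D ` I) = card I"
    by (simp add: card_image)
  moreover have "D ` I \<subseteq> Pow B"
    using assms(2) by auto
  ultimately have "D ` I = Pow B"
    using assms(1,3) by (intro card_seteq) (simp_all add: card_Pow)
  then show "\<exists>i\<in>I. D i = {}"
    by (metis Pow_bottom imageE)
qed

theorem theorem3:
  fixes q n l M :: nat
    and Q :: "nat \<Rightarrow> nat \<Rightarrow> nat list list \<Rightarrow> nat list list \<Rightarrow> nat list \<Rightarrow> real"
    and D :: "nat \<Rightarrow> nat list list set"
  assumes "q \<ge> 2" and "n \<ge> 1" and "l \<ge> 1"
    and "IDF_code q n l M Q D"
    and "M \<ge> 2 ^ (q ^ (n * l))"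
  shows "type1_error q n l M Q D + type2_error q n l M Q D \<ge> 1"
proof -
  have enc: "valid_encoder q n l (Q i)" and dec: "D i \<subseteq> block_seqs q n l" if "i \<in> {1..M}" for i
    using assms(4) that by (auto simp: IDF_code_def)
  \<comment> \<open>\<open>\<lambda>\<^sub>2\<close> is a maximum over pairs of distinct messages, so at least two are needed;
    \<open>n \<ge> 1\<close> and \<open>l \<ge> 1\<close> are not.\<close>
  have "(2::nat) ^ 1 \<le> 2 ^ (q ^ (n * l))"
    using assms(1) by (intro power_increasing) simp_all
  then have twoM: "1 \<in> {1..M}" "2 \<in> {1..M}"
    using assms(5) by auto
  have "(\<exists>i\<in>{1..M}. D i = {}) \<or> \<not> inj_on D {1..M}"
    using assms(5) by (intro empty_member_or_not_inj_on[OF finite_block_seqs dec])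
      (simp_all add: card_block_seqs)
  then show ?thesis
  proof
    assume "\<exists>i\<in>{1..M}. D i = {}"
    then obtain i where i: "i \<in> {1..M}" "D i = {}" ..
    show ?thesis
      using type1_error_ge[OF i(1), of q n l Q D] out_prob_block_seqs[OF enc[OF i(1)]] i(2)
        type2_error_ge[OF twoM, of q n l Q D] out_prob_nonneg[OF enc[OF twoM(1)], of "D 2"]
      by simp
  next
    assume "\<not> inj_on D {1..M}"
    then obtain i j where ij: "i \<in> {1..M}" "j \<in> {1..M}" "i \<noteq> j" "D i = D j"
      unfolding inj_on_def by blast
    show ?thesis
      using type1_error_ge[OF ij(1), of q n l Q D] type2_error_ge[OF ij(1-3), of q n l Q D] ij(4)
        out_prob_compl[OF enc dec, OF ij(1) ij(1)]
      by simp
  qed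
qed

end
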